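(* Let $k\ge2$, let $\mathcal{F}\subset 2^{[n]}$ be weakly $k$-cross-free, and let $\mathcal{C}_1,\dots,\mathcal{C}_k$ be nonempty chains with $\mathcal{C}_l\subset\mathcal{F}_{j_l}$ for integers $j_1<\dots<j_k$. For each $l$ fix a set $Y(\mathcal{C}_l)$ as described in the context. Then there do not exist $k$ distinct elements $y_1,\dots,y_k\in[n]$ such that $(\mathcal{C}_1,\dots,\mathcal{C}_k)$ is good for each of $y_1,\dots,y_k$.
   Context: Sets $A,B$ are weakly crossing if $A\setminus B$, $B\setminus A$, $A\cap B$ are all non-empty; a family is weakly $k$-cross-free if it contains no $k$ pairwise weakly crossing sets. $\mathcal{F}_i=\{X\in\mathcal{F}:2^i<|X|\le 2^{i+1}\}$. A chain is written $\mathcal{C}(1)\subsetneq\dots\subsetneq\mathcal{C}(l)$. $Y(\mathcal{C})$ is a set obtained by choosing one element of $\mathcal{C}(1)$ and one element of each difference $\mathcal{C}(j+1)\setminus\mathcal{C}(j)$, $j=1,\dots,l-1$. The $k$-tuple $(\mathcal{C}_1,\dots,\mathcal{C}_k)$ is good for $y$ if (i) $y\in Y(\mathcal{C}_l)$ for every $l\in[k]$ and (ii) letting $C_l$ be the smallest set in $\mathcal{C}_l$ containing $y$, we have $C_1\subset C_2\subset\dots\subset C_k$. *)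

theory Defs
  imports Complex_Main
begin

definition weakly_crossing :: "'a set \<Rightarrow> 'a set \<Rightarrow> bool" where
  "weakly_crossing A B \<longleftrightarrow> A - B \<noteq> {} \<and> B - A \<noteq> {} \<and> A \<inter> B \<noteq> {}"

definition weakly_k_cross_free :: "nat \<Rightarrow> 'a set set \<Rightarrow> bool" where
  "weakly_k_cross_free k F \<longleftrightarrow>
     \<not> (\<exists>S. S \<subseteq> F \<and> card S = k \<and> (\<forall>A\<in>S. \<forall>B\<in>S. A \<noteq> B \<longrightarrow> weakly_crossing A B))"

definition level :: "'a set set \<Rightarrow> int \<Rightarrow> 'a set set" where
  "level F i = {X \<in> F. (2::real) powi i < real (card X) \<and> real (card X) \<le> (2::real) powi (i + 1)}"

text \<open>A chain C(1) strictly contained in ... C(l), represented as a list (0-indexed).\<close>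
definition is_chain :: "'a set list \<Rightarrow> bool" where
  "is_chain C \<longleftrightarrow> (\<forall>i. Suc i < length C \<longrightarrow> C ! i \<subset> C ! Suc i)"

definition is_Y :: "'a set list \<Rightarrow> 'a set \<Rightarrow> bool" where
  "is_Y C Y \<longleftrightarrow> (\<exists>f. f 0 \<in> C ! 0 \<and>
      (\<forall>i. Suc i < length C \<longrightarrow> f (Suc i) \<in> C ! Suc i - C ! i) \<and>
      Y = f ` {..<length C})"

definition smallest_containing :: "'a set list \<Rightarrow> 'a \<Rightarrow> 'a set" where
  "smallest_containing C y = C ! (LEAST i. i < length C \<and> y \<in> C ! i)"

definition good :: "nat \<Rightarrow> (nat \<Rightarrow> 'a set list) \<Rightarrow> (nat \<Rightarrow> 'a set) \<Rightarrow> 'a \<Rightarrow> bool" where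
  "good k Cs Ys y \<longleftrightarrow> (\<forall>l<k. y \<in> Ys l) \<and>
     (\<forall>l. Suc l < k \<longrightarrow> smallest_containing (Cs l) y \<subseteq> smallest_containing (Cs (Suc l)) y)"

end

theory Submission imports Defs begin

text \<open>Let \<open>T\<close> be the set of the \<open>k\<close> points \<open>y\<^sub>m\<close>. Since \<open>T \<subseteq> Y(\<C>\<^sub>l)\<close> and \<open>Y(\<C>\<^sub>l)\<close> meets
  the first set and every difference of consecutive sets of \<open>\<C>\<^sub>l\<close> in at most one point,
  \<open>|T \<inter> C|\<close> grows by steps of at most one along \<open>\<C>\<^sub>l\<close>, from at most \<open>1\<close> up to \<open>k\<close>.
  Hence each \<open>\<C>\<^sub>l\<close> contains a set \<open>A\<^sub>l\<close> with \<open>|T \<inter> A\<^sub>l| = k - l\<close>. For \<open>l < l'\<close>, the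
  levels force \<open>|A\<^sub>l| < |A\<^sub>l\<^sub>'|\<close>, the traces on \<open>T\<close> force \<open>A\<^sub>l \<nsubseteq> A\<^sub>l\<^sub>'\<close>, and a point
  \<open>y \<in> T \<inter> A\<^sub>l\<^sub>'\<close> together with goodness for \<open>y\<close> gives \<open>A\<^sub>l \<inter> A\<^sub>l\<^sub>' \<noteq> {}\<close>: the smallest
  set of \<open>\<C>\<^sub>l\<close> containing \<open>y\<close> lies in \<open>A\<^sub>l\<^sub>'\<close> and is comparable with \<open>A\<^sub>l\<close>. So the \<open>A\<^sub>l\<close>
  are \<open>k\<close> pairwise weakly crossing members of \<open>\<F>\<close>.\<close>

lemma is_chain_mono:
  assumes "is_chain C" "i \<le> j" "j < length C"
  shows "C ! i \<subseteq> C ! j"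
  by (rule lift_Suc_mono_le_ivl[where N = "{i. Suc i < length C}"])
     (use assms in \<open>auto simp: is_chain_def less_imp_le\<close>)

lemma is_chain_comparable:
  assumes "is_chain C" "A \<in> set C" "B \<in> set C"
  shows "A \<subseteq> B \<or> B \<subseteq> A"
proof -
  obtain a b where "a < length C" "b < length C" "A = C ! a" "B = C ! b"
    using assms(2,3) by (auto simp: in_set_conv_nth)
  then show ?thesis
    using is_chain_mono[OF assms(1)] nat_le_linear by metis
qed

lemma chain_choice_mem_iff:
  assumes "is_chain C" "f 0 \<in> C ! 0" "\<forall>i. Suc i < length C \<longrightarrow> f (Suc i) \<in> C ! Suc i - C ! i"
    and "i' < length C" "i < length C"
  shows "f i' \<in> C ! i \<longleftrightarrow> i' \<le> i"
proof
  assume mem: "f i' \<in> C ! i"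
  show "i' \<le> i"
  proof (rule ccontr)
    assume "\<not> i' \<le> i"
    then obtain p where p: "i' = Suc p" "i \<le> p"
      by (cases i') auto
    then have "f i' \<notin> C ! p"
      using assms(3,4) by auto
    moreover have "C ! i \<subseteq> C ! p"
      using is_chain_mono[OF assms(1) p(2)] p assms(4) by simp
    ultimately show False
      using mem by blast
  qed
next
  assume "i' \<le> i"
  moreover have "f i' \<in> C ! i'"
    using assms by (cases i') auto
  ultimately show "f i' \<in> C ! i"
    using is_chain_mono[OF assms(1) _ assms(5)] by blast
qed

lemma finite_is_Y: "is_Y C Y \<Longrightarrow> finite Y"
  by (auto simp: is_Y_def)

lemma is_Y_subset_last:
  assumes "is_chain C" "C \<noteq> []" "is_Y C Y"
  shows "Y \<subseteq> last C"
proof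
  fix y assume "y \<in> Y"
  then obtain f i where f: "f 0 \<in> C ! 0" "\<forall>i. Suc i < length C \<longrightarrow> f (Suc i) \<in> C ! Suc i - C ! i"
    and i: "i < length C" "y = f i"
    using assms(3) unfolding is_Y_def by blast
  then show "y \<in> last C"
    using chain_choice_mem_iff[OF assms(1) f i(1), of "length C - 1"] assms(2)
    by (simp add: last_conv_nth)
qed

lemma card_is_Y_inter_first:
  assumes "is_chain C" "C \<noteq> []" "is_Y C Y"
  shows "card (Y \<inter> C ! 0) \<le> 1"
proof -
  obtain f where f: "f 0 \<in> C ! 0" "\<forall>i. Suc i < length C \<longrightarrow> f (Suc i) \<in> C ! Suc i - C ! i"
    and Y: "Y = f ` {..<length C}"
    using assms(3) unfolding is_Y_def by blast
  have "Y \<inter> C ! 0 \<subseteq> {f 0}"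
    using chain_choice_mem_iff[OF assms(1) f, of _ 0] assms(2) by (auto simp: Y)
  then show ?thesis
    using card_mono[of "{f 0}"] by fastforce
qed

lemma card_is_Y_inter_diff:
  assumes "is_chain C" "is_Y C Y" "Suc i < length C"
  shows "card (Y \<inter> (C ! Suc i - C ! i)) \<le> 1"
proof -
  obtain f where f: "f 0 \<in> C ! 0" "\<forall>i. Suc i < length C \<longrightarrow> f (Suc i) \<in> C ! Suc i - C ! i"
    and Y: "Y = f ` {..<length C}"
    using assms(2) unfolding is_Y_def by blast
  have "f i' = f (Suc i)" if "i' < length C" "f i' \<in> C ! Suc i" "f i' \<notin> C ! i" for i'
    using chain_choice_mem_iff[OF assms(1) f that(1)] that assms(3) by (metis Suc_lessD le_SucE)
  then have "Y \<inter> (C ! Suc i - C ! i) \<subseteq> {f (Suc i)}"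
    by (auto simp: Y)
  then show ?thesis
    using card_mono[of "{f (Suc i)}"] by fastforce
qed

lemma chain_member_with_card_inter:
  assumes "is_chain C" "C \<noteq> []" "is_Y C Y" "T \<subseteq> Y" "1 \<le> r" "r \<le> card T"
  shows "\<exists>A\<in>set C. card (T \<inter> A) = r"
proof -
  have fin: "finite T"
    using assms(3,4) finite_is_Y finite_subset by blast
  define g where "g i = int (card (T \<inter> C ! i))" for i
  define N where "N = length C - 1"
  have N: "N < length C"
    using assms(2) by (simp add: N_def)
  have "T \<inter> C ! 0 \<subseteq> Y \<inter> C ! 0"
    using assms(4) by blast
  then have "g 0 \<le> 1"
    using card_is_Y_inter_first[OF assms(1,2,3)] card_mono[OF _ \<open>T \<inter> C ! 0 \<subseteq> Y \<inter> C ! 0\<close>]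
      finite_is_Y[OF assms(3)] by (simp add: g_def)
  moreover have "\<bar>g (i + 1) - g i\<bar> \<le> 1" if "i < N" for i
  proof -
    have sub: "C ! i \<subseteq> C ! Suc i"
      using is_chain_mono[OF assms(1), of i "Suc i"] that N by simp
    have "T \<inter> C ! Suc i = (T \<inter> C ! i) \<union> (T \<inter> (C ! Suc i - C ! i))"
      using sub by blast
    then have "card (T \<inter> C ! Suc i) = card (T \<inter> C ! i) + card (T \<inter> (C ! Suc i - C ! i))"
      using fin by (simp add: card_Un_disjoint disjoint_iff)
    moreover have "card (T \<inter> (C ! Suc i - C ! i)) \<le> card (Y \<inter> (C ! Suc i - C ! i))"
      using assms(4) finite_is_Y[OF assms(3)] by (intro card_mono) auto
    ultimately show ?thesis
      using card_is_Y_inter_diff[OF assms(1,3), of i] that N by (simp add: g_def)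
  qed
  moreover have "g N = card T"
    using is_Y_subset_last[OF assms(1,2,3)] assms(2,4)
    by (simp add: g_def N_def last_conv_nth Int_absorb2 subset_trans)
  ultimately obtain i where "i \<le> N" "g i = int r"
    using nat0_intermed_int_val[of N g "int r"] assms(5,6) by auto
  then show ?thesis
    using N by (intro bexI[of _ "C ! i"]) (auto simp: g_def)
qed

lemma smallest_containing:
  assumes "is_chain C" "B \<in> set C" "y \<in> B"
  shows "smallest_containing C y \<in> set C" "y \<in> smallest_containing C y"
    and "\<And>A. A \<in> set C \<Longrightarrow> y \<in> A \<Longrightarrow> smallest_containing C y \<subseteq> A"
proof -
  obtain i where i: "i < length C" "y \<in> C ! i"
    using assms(2,3) by (auto simp: in_set_conv_nth)
  define m where "m = (LEAST i. i < length C \<and> y \<in> C ! i)"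
  have m: "m < length C" "y \<in> C ! m"
    using LeastI[of "\<lambda>i. i < length C \<and> y \<in> C ! i", OF conjI[OF i]] by (simp_all add: m_def)
  show "smallest_containing C y \<in> set C" "y \<in> smallest_containing C y"
    using m by (simp_all add: smallest_containing_def m_def[symmetric])
  fix A assume "A \<in> set C" "y \<in> A"
  then obtain a where "a < length C" "A = C ! a"
    by (auto simp: in_set_conv_nth)
  moreover have "m \<le> a"
    unfolding m_def by (rule Least_le) (use calculation \<open>y \<in> A\<close> in simp)
  ultimately show "smallest_containing C y \<subseteq> A"
    using is_chain_mono[OF assms(1)] by (simp add: smallest_containing_def m_def[symmetric])
qed

lemma good_smallest_containing_mono:
  assumes "good k Cs Ys y" "l \<le> l'" "l' < k"
  shows "smallest_containing (Cs l) y \<subseteq> smallest_containing (Cs l') y"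
  by (rule lift_Suc_mono_le_ivl[where N = "{l. Suc l < k}"])
     (use assms in \<open>auto simp: good_def\<close>)

lemma card_less_if_level_less:
  assumes "X \<in> level F a" "X' \<in> level F b" "a < b"
  shows "card X < card X'"
proof -
  have "real (card X) \<le> 2 powi (a + 1)"
    using assms(1) by (simp add: level_def)
  also have "\<dots> \<le> 2 powi b"
    by (rule power_int_increasing) (use assms(3) in auto)
  also have "\<dots> < real (card X')"
    using assms(2) by (simp add: level_def)
  finally show ?thesis
    by simp
qed

lemma card_less_along_levels:
  fixes j :: "nat \<Rightarrow> int"
  assumes "\<And>l. l < k \<Longrightarrow> A l \<in> level F (j l)" "\<And>l. Suc l < k \<Longrightarrow> j l < j (Suc l)"
    and "l < l'" "l' < k"
  shows "card (A l) < card (A l')"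
proof (rule card_less_if_level_less)
  show "j l < j l'"
    by (rule lift_Suc_mono_less_ivl[where N = "{l. Suc l < k}"]) (use assms(2-4) in auto)
qed (use assms in auto)

lemma weakly_crossing_commute: "weakly_crossing A B \<longleftrightarrow> weakly_crossing B A"
  by (auto simp: weakly_crossing_def)

lemma weakly_crossing_chain_members:
  assumes "is_chain C" "is_chain C'" "A \<in> set C" "A' \<in> set C'" "finite A" "finite T"
    and "card A < card A'" "card (T \<inter> A') < card (T \<inter> A)"
    and "B \<in> set C" "y \<in> B" "y \<in> A'"
    and "smallest_containing C y \<subseteq> smallest_containing C' y"
  shows "weakly_crossing A A'"
proof -
  have "\<not> A' \<subseteq> A"
    using card_mono[OF assms(5), of A'] assms(7) by linarith
  moreover have "\<not> A \<subseteq> A'"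
  proof
    assume "A \<subseteq> A'"
    then have "card (T \<inter> A) \<le> card (T \<inter> A')"
      by (intro card_mono) (use assms(6) in auto)
    then show False
      using assms(8) by linarith
  qed
  moreover have "A \<inter> A' \<noteq> {}"
  proof -
    let ?S = "smallest_containing C y"
    have "?S \<subseteq> A'"
      using assms(12) smallest_containing(3)[OF assms(2,4,11) assms(4,11)] by blast
    moreover have "A \<noteq> {}"
      using assms(8) by auto
    ultimately show ?thesis
      using is_chain_comparable[OF assms(1) smallest_containing(1)[OF assms(1,9,10)] assms(3)]
        smallest_containing(2)[OF assms(1,9,10)] by blast
  qed
  ultimately show ?thesis
    by (auto simp: weakly_crossing_def)
qed

lemma not_weakly_k_cross_free:
  assumes "\<And>l. l < k \<Longrightarrow> A l \<in> F" "inj_on A {..<k}"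
    and "\<And>l l'. l < l' \<Longrightarrow> l' < k \<Longrightarrow> weakly_crossing (A l) (A l')"
  shows "\<not> weakly_k_cross_free k F"
proof -
  have "weakly_crossing X Z" if XZ: "X \<in> A ` {..<k}" "Z \<in> A ` {..<k}" "X \<noteq> Z" for X Z
  proof -
    obtain a b where "a < k" "b < k" "X = A a" "Z = A b"
      using XZ(1,2) by blast
    then show ?thesis
      using assms(3)[of a b] assms(3)[of b a] weakly_crossing_commute XZ(3)
      by (cases a b rule: linorder_cases) auto
  qed
  moreover have "A ` {..<k} \<subseteq> F" "card (A ` {..<k}) = k"
    using assms(1,2) by (auto simp: card_image)
  ultimately show ?thesis
    unfolding weakly_k_cross_free_def not_not by (intro exI[of _ "A ` {..<k}"]) blast
qed

lemma chain_layers_weakly_crossing: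
  assumes chains: "\<And>l. l < k \<Longrightarrow> is_chain (Cs l) \<and> Cs l \<noteq> [] \<and> is_Y (Cs l) (Ys l)"
    and T: "finite T" "\<And>y. y \<in> T \<Longrightarrow> good k Cs Ys y"
    and A: "\<And>l. l < k \<Longrightarrow> A l \<in> set (Cs l) \<and> finite (A l) \<and> card (T \<inter> A l) = k - l"
    and card_A: "\<And>l l'. l < l' \<Longrightarrow> l' < k \<Longrightarrow> card (A l) < card (A l')"
    and "l < l'" "l' < k"
  shows "weakly_crossing (A l) (A l')"
proof -
  have "l < k"
    using assms(6,7) by simp
  have "T \<inter> A l' \<noteq> {}"
    using A[OF assms(7)] assms(7) by force
  then obtain y where y: "y \<in> T" "y \<in> A l'"
    by blast
  have "y \<in> last (Cs l)"
    using is_Y_subset_last chains[OF \<open>l < k\<close>] T(2)[OF y(1)] \<open>l < k\<close>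
    by (auto simp: good_def)
  moreover have "card (T \<inter> A l') < card (T \<inter> A l)"
    using A assms(6,7) by simp
  ultimately show ?thesis
    using weakly_crossing_chain_members[of "Cs l" "Cs l'" "A l" "A l'" T "last (Cs l)" y]
      chains[OF \<open>l < k\<close>] chains[OF assms(7)] A[OF \<open>l < k\<close>] A[OF assms(7)] T(1) y(2)
      card_A[OF assms(6,7)] good_smallest_containing_mono[OF T(2)[OF y(1)] _ assms(7), of l] assms(6)
    by simp
qed

theorem claim5:
  fixes n k :: nat and F :: "nat set set" and Cs :: "nat \<Rightarrow> nat set list"
    and j :: "nat \<Rightarrow> int" and Ys :: "nat \<Rightarrow> nat set"
  assumes "k \<ge> 2"
    and "F \<subseteq> Pow {1..n}"
    and "weakly_k_cross_free k F"
    and "\<And>l. l < k \<Longrightarrow> Cs l \<noteq> [] \<and> is_chain (Cs l) \<and> set (Cs l) \<subseteq> level F (j l)"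
    and "\<And>l. Suc l < k \<Longrightarrow> j l < j (Suc l)"
    and "\<And>l. l < k \<Longrightarrow> is_Y (Cs l) (Ys l)"
  shows "\<not> (\<exists>ys :: nat \<Rightarrow> nat. inj_on ys {..<k} \<and> ys ` {..<k} \<subseteq> {1..n} \<and>
              (\<forall>m<k. good k Cs Ys (ys m)))"
proof
  assume "\<exists>ys :: nat \<Rightarrow> nat. inj_on ys {..<k} \<and> ys ` {..<k} \<subseteq> {1..n} \<and>
              (\<forall>m<k. good k Cs Ys (ys m))"
  then obtain ys where "inj_on ys {..<k}" and good_ys: "\<forall>m<k. good k Cs Ys (ys m)"
    by blast
  define T where "T = ys ` {..<k}"
  have T: "finite T" "card T = k" "\<And>y. y \<in> T \<Longrightarrow> good k Cs Ys y"
    using \<open>inj_on ys {..<k}\<close> good_ys by (auto simp: T_def card_image)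
  have "\<exists>B\<in>set (Cs l). card (T \<inter> B) = k - l" if "l < k" for l
  proof -
    have "T \<subseteq> Ys l"
      using T(3) that by (auto simp: good_def)
    then show ?thesis
      using chain_member_with_card_inter[of "Cs l" "Ys l" T "k - l"] assms(4,6) T(2) that by simp
  qed
  then obtain A where A: "\<And>l. l < k \<Longrightarrow> A l \<in> set (Cs l) \<and> card (T \<inter> A l) = k - l"
    by metis
  have A_level: "A l \<in> level F (j l)" if "l < k" for l
    using A[OF that] assms(4)[OF that] by blast
  have A_F: "A l \<in> F \<and> finite (A l)" if "l < k" for l
    using A_level[OF that] assms(2) by (auto simp: level_def intro: finite_subset)
  have card_A: "card (A l) < card (A l')" if "l < l'" "l' < k" for l l'
    using card_less_along_levels[of k A F j] A_level assms(5) that by blast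
  then have "inj_on A {..<k}"
    by (metis inj_onI lessThan_iff less_irrefl nat_neq_iff)
  then show False
    using not_weakly_k_cross_free[of k A F] chain_layers_weakly_crossing[of k Cs Ys T A] assms(3,4,6)
      T(1,3) A A_F card_A by blast
qed

end
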